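(* Let $\mathcal{X},\mathcal{Y}$ be finite, $P_X$ a distribution, $P_{Y|X}$ a channel, $P_{XY}=P_XP_{Y|X}$ with $\mathcal{Y}$-marginal $P_Y$, and $R>I(P_X,P_{Y|X})>0$. Define \[ \alpha(R,P_X,P_{Y|X})=\min_{Q_{XY}}\Big\{D(Q_{XY}\|P_{XY})+\tfrac12\big[R-D(Q_{XY}\|P_XQ_Y)\big]_+\Big\}, \] \[ \beta(R,P_X,P_{Y|X})=\max_{\lambda\ge0}\max_{\lambda'\le1}\Big\{\frac{\lambda}{2\lambda+1-\lambda'}\Big(R-(1-\lambda')D_{1+\lambda}(P_{XY}\|P_XP_Y)-\lambda'\widetilde D_{1+\lambda'}(P_{XY}\|P_XP_Y)\Big)\Big\}. \] Then $\alpha(R,P_X,P_{Y|X})\ge\beta(R,P_X,P_{Y|X})$.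
   Context: $Q_Y$ is the $\mathcal{Y}$-marginal of $Q_{XY}$, $[f]_+=\max\{0,f\}$, $D$ is relative entropy. With $(X,Y)\sim P_{XY}$ and information density $\imath_{X;Y}(x;y)=\log\frac{P_{Y|X}(y|x)}{P_Y(y)}$: $D_{1+\lambda}(P_{XY}\|P_XP_Y)=\frac1\lambda\log\mathbb{E}[\exp(\lambda\,\imath_{X;Y}(X;Y))]$ (the Rényi divergence of order $1+\lambda$; at $\lambda=0$ it equals the mutual information), and $\widetilde D_{1+\lambda'}(P_{XY}\|P_XP_Y)=\frac{2}{\lambda'}\log\mathbb{E}\big[\mathbb{E}^{1/2}[\exp(\lambda'\,\imath_{X;Y}(X;Y))\mid Y]\big]$, so that $\lambda'\widetilde D_{1+\lambda'}=2\log\mathbb{E}\big[\mathbb{E}^{1/2}[\exp(\lambda'\imath_{X;Y}(X;Y))|Y]\big]$. Logs and exps use a common base. *)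

theory Defs
  imports "HOL-Probability.Probability"
begin

text \<open>Finite alphabets are finite types; logs/exps are natural (base e).
  Joint distributions are given by pmfs; quantities are written out as finite sums.\<close>

definition PXY :: "'a pmf \<Rightarrow> ('a \<Rightarrow> 'b pmf) \<Rightarrow> 'a \<times> 'b \<Rightarrow> real" where
  "PXY PX W = (\<lambda>(x,y). pmf PX x * pmf (W x) y)"

definition PYm :: "'a::finite pmf \<Rightarrow> ('a \<Rightarrow> 'b pmf) \<Rightarrow> 'b \<Rightarrow> real" where
  "PYm PX W y = (\<Sum>x\<in>UNIV. PXY PX W (x,y))"

definition QYm :: "('a::finite \<times> 'b) pmf \<Rightarrow> 'b \<Rightarrow> real" where
  "QYm Q y = (\<Sum>x\<in>UNIV. pmf Q (x,y))"

definition relent :: "('c::finite \<Rightarrow> real) \<Rightarrow> ('c \<Rightarrow> real) \<Rightarrow> ereal" where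
  "relent Q P = (if (\<exists>z. Q z > 0 \<and> P z = 0) then \<infinity>
      else ereal (\<Sum>z\<in>{z. Q z > 0}. Q z * ln (Q z / P z)))"

text \<open>exp of the information density: P_{Y|X}(y|x)/P_Y(y).\<close>
definition ratio :: "'a::finite pmf \<Rightarrow> ('a \<Rightarrow> 'b pmf) \<Rightarrow> 'a \<times> 'b \<Rightarrow> real" where
  "ratio PX W = (\<lambda>(x,y). pmf (W x) y / PYm PX W y)"

definition mutual_info :: "'a::finite pmf \<Rightarrow> ('a \<Rightarrow> 'b::finite pmf) \<Rightarrow> real" where
  "mutual_info PX W = (\<Sum>z\<in>{z. PXY PX W z > 0}. PXY PX W z * ln (ratio PX W z))"

text \<open>D_{1+\<lambda>}(P_XY || P_X P_Y); at \<lambda> = 0 it is the mutual information.\<close>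
definition renyi :: "real \<Rightarrow> 'a::finite pmf \<Rightarrow> ('a \<Rightarrow> 'b::finite pmf) \<Rightarrow> real" where
  "renyi l PX W = (if l = 0 then mutual_info PX W
     else (1 / l) * ln (\<Sum>z\<in>{z. PXY PX W z > 0}. PXY PX W z * (ratio PX W z) powr l))"

text \<open>\<lambda>' * tilde D_{1+\<lambda>'} = 2 log E[ E^{1/2}[exp(\<lambda>' i(X;Y)) | Y] ].\<close>
definition lam_tildeD :: "real \<Rightarrow> 'a::finite pmf \<Rightarrow> ('a \<Rightarrow> 'b::finite pmf) \<Rightarrow> real" where
  "lam_tildeD l PX W = 2 * ln (\<Sum>y\<in>{y. PYm PX W y > 0}. PYm PX W y *
      sqrt ((\<Sum>x\<in>{x. PXY PX W (x,y) > 0}. PXY PX W (x,y) * (ratio PX W (x,y)) powr l)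
            / PYm PX W y))"

definition alpha_exp :: "real \<Rightarrow> 'a::finite pmf \<Rightarrow> ('a \<Rightarrow> 'b::finite pmf) \<Rightarrow> ereal" where
  "alpha_exp R PX W = (INF Q\<in>(UNIV :: ('a \<times> 'b) pmf set).
      relent (pmf Q) (PXY PX W)
      + ereal (1/2) * max 0 (ereal R - relent (pmf Q) (\<lambda>(x,y). pmf PX x * QYm Q y)))"

definition beta_exp :: "real \<Rightarrow> 'a::finite pmf \<Rightarrow> ('a \<Rightarrow> 'b::finite pmf) \<Rightarrow> ereal" where
  "beta_exp R PX W = (SUP p\<in>{(l, l'). l \<ge> 0 \<and> l' \<le> (1::real)}.
      ereal (fst p / (2 * fst p + 1 - snd p)
        * (R - (1 - snd p) * renyi (fst p) PX W - lam_tildeD (snd p) PX W)))"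

end

theory Submission
  imports Defs
begin

text \<open>The bound holds term by term and for every rate \<open>R\<close>. Fix \<open>\<lambda> > 0\<close>, \<open>\<lambda>' \<le> 1\<close> and \<open>Q \<ll> P_XY\<close> (otherwise the \<open>\<alpha>\<close>-term is infinite), and
  write \<open>D1 = D(Q||P_XY)\<close>, \<open>D2 = D(Q||P_X Q_Y)\<close>, \<open>S = E_Q[\<imath>(X;Y)]\<close>. The chain rule gives
  \<open>D2 = D1 + S - D(Q_Y||P_Y)\<close>. The log-sum inequality (Gibbs' variational principle) applied to \<open>Q\<close>
  against \<open>P_XY exp(\<lambda>\<imath>)\<close> gives \<open>\<lambda>S - \<lambda>D_{1+\<lambda>} \<le> D1\<close>; applied within each fibre \<open>Y = y\<close> against
  \<open>P_XY exp(\<lambda>'\<imath>)\<close>, and then to \<open>Q_Y\<close> against \<open>sqrt(P_Y(y) E[exp(\<lambda>'\<imath>) | Y = y])\<close>, it gives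
  \<open>-\<lambda>'D~_{1+\<lambda>'} \<le> D1 + D(Q_Y||P_Y) - \<lambda>'S\<close>. Adding \<open>1 - \<lambda>'\<close> times the first and \<open>\<lambda>\<close> times the
  second bound shows that the \<open>\<beta>\<close>-term is at most \<open>D1 + \<lambda>/(2\<lambda>+1-\<lambda>') (R - D2)\<close>, and
  \<open>\<lambda>/(2\<lambda>+1-\<lambda>') \<le> 1/2\<close>.\<close>

lemma log_sum_term_bound:
  fixes a b A B :: real
  assumes "a \<ge> 0" "b \<ge> 0" "a > 0 \<Longrightarrow> b > 0" "A > 0" "B > 0"
  shows "a * ln (A / B) + a - b * A / B \<le> a * ln (a / b)"
proof (cases "a = 0")
  case True
  then show ?thesis using assms by simp
next
  case False
  with assms have a: "a > 0" "b > 0" by auto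
  define t where "t = (b * A) / (a * B)"
  have t: "t > 0" using a assms by (simp add: t_def)
  have "ln (a / b) = ln (A / B) - ln t"
    using a assms by (simp add: t_def ln_div ln_mult)
  moreover have "a * ln t \<le> a * (t - 1)"
    using ln_le_minus_one[OF t] a by (simp add: mult_left_mono)
  moreover have "a * (t - 1) = b * A / B - a"
    using a assms by (simp add: t_def field_simps)
  ultimately show ?thesis by (simp add: right_diff_distrib)
qed

lemma log_sum_inequality:
  fixes a b :: "'c \<Rightarrow> real"
  assumes "finite S" "\<forall>z\<in>S. a z \<ge> 0" "\<forall>z\<in>S. b z \<ge> 0" "\<forall>z\<in>S. a z > 0 \<longrightarrow> b z > 0"
    and "sum b S \<le> B" "B > 0" "sum a S > 0"
  shows "sum a S * ln (sum a S / B) \<le> (\<Sum>z\<in>S. a z * ln (a z / b z))"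
proof -
  define A where "A = sum a S"
  have A: "A > 0" using assms by (simp add: A_def)
  have "(\<Sum>z\<in>S. a z * ln (A / B) + a z - b z * A / B) \<le> (\<Sum>z\<in>S. a z * ln (a z / b z))"
    by (rule sum_mono) (use log_sum_term_bound assms A in auto)
  moreover have "(\<Sum>z\<in>S. a z * ln (A / B) + a z - b z * A / B) = A * ln (A / B) + A - sum b S * A / B"
    by (simp add: sum.distrib sum_subtractf sum_distrib_right A_def sum_divide_distrib)
  moreover have "sum b S * A / B \<le> A"
    using assms A by (simp add: divide_le_eq mult.commute mult_left_mono)
  ultimately show ?thesis unfolding A_def[symmetric] by linarith
qed

corollary log_sum_inequality_normalized:
  fixes q b :: "'c::finite \<Rightarrow> real"
  assumes "\<And>z. q z \<ge> 0" "sum q UNIV = 1" "\<And>z. b z \<ge> 0" "\<And>z. q z > 0 \<Longrightarrow> b z > 0"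
  shows "- ln (sum b UNIV) \<le> (\<Sum>z\<in>UNIV. q z * ln (q z / b z))"
proof -
  obtain z0 where "q z0 > 0"
    using assms(1,2) by (metis less_eq_real_def sum.neutral zero_neq_one)
  then have "b z0 > 0" by (rule assms(4))
  moreover have "b z0 \<le> sum b UNIV" by (rule member_le_sum) (auto simp: assms(3))
  ultimately have "sum b UNIV > 0" by linarith
  then have "sum q UNIV * ln (sum q UNIV / sum b UNIV) \<le> (\<Sum>z\<in>UNIV. q z * ln (q z / b z))"
    by (intro log_sum_inequality) (auto simp: assms)
  with \<open>sum b UNIV > 0\<close> show ?thesis by (simp add: assms(2) ln_div)
qed

lemma sum_UNIV_pairs:
  fixes f :: "'a::finite \<times> 'b::finite \<Rightarrow> 'c::comm_monoid_add"
  shows "(\<Sum>z\<in>UNIV. f z) = (\<Sum>y\<in>UNIV. \<Sum>x\<in>UNIV. f (x, y))"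
  by (subst sum.swap) (simp add: sum.cartesian_product flip: UNIV_Times_UNIV)

lemma sum_over_positive:
  fixes F :: "'c::finite \<Rightarrow> real"
  assumes "\<And>z. \<not> g z > (0::real) \<Longrightarrow> F z = 0"
  shows "(\<Sum>z\<in>{z. g z > 0}. F z) = (\<Sum>z\<in>UNIV. F z)"
  by (rule sum.mono_neutral_left) (auto simp: assms)

lemma relent_eq_sum:
  fixes q p :: "'c::finite \<Rightarrow> real"
  assumes "\<And>z. q z \<ge> 0" "\<And>z. q z > 0 \<Longrightarrow> p z > 0"
  shows "relent q p = ereal (\<Sum>z\<in>UNIV. q z * ln (q z / p z))"
proof -
  have "(\<Sum>z\<in>{z. q z > 0}. q z * ln (q z / p z)) = (\<Sum>z\<in>UNIV. q z * ln (q z / p z))"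
    by (rule sum_over_positive) (use assms(1) less_eq_real_def in fastforce)
  moreover have "\<not> (\<exists>z. q z > 0 \<and> p z = 0)" using assms(2) by (metis less_irrefl)
  ultimately show ?thesis by (simp add: relent_def)
qed

lemma relent_nonneg:
  fixes Q :: "'c::finite pmf" and p :: "'c \<Rightarrow> real"
  assumes "\<And>z. p z \<ge> 0" "sum p UNIV \<le> 1"
  shows "relent (pmf Q) p \<ge> 0"
proof (cases "\<exists>z. pmf Q z > 0 \<and> p z = 0")
  case True
  then show ?thesis by (simp add: relent_def)
next
  case False
  then have ac: "pmf Q z > 0 \<Longrightarrow> p z > 0" for z
    using assms(1)[of z] by (auto simp: order_le_less)
  obtain z0 where "z0 \<in> set_pmf Q" using set_pmf_not_empty[of Q] by blast
  then have "pmf Q z0 > 0" by (simp add: pmf_positive)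
  then have "0 < p z0" by (rule ac)
  also have "p z0 \<le> sum p UNIV" by (rule member_le_sum) (auto simp: assms(1))
  finally have "- ln (sum p UNIV) \<ge> 0" using assms(2) by (simp add: ln_le_zero_iff)
  also have "- ln (sum p UNIV) \<le> (\<Sum>z\<in>UNIV. pmf Q z * ln (pmf Q z / p z))"
    by (rule log_sum_inequality_normalized) (simp_all add: assms(1) sum_pmf_eq_1 ac)
  also have "ereal \<dots> = relent (pmf Q) p"
    by (rule relent_eq_sum[symmetric]) (simp_all add: ac)
  finally show ?thesis by (simp add: zero_ereal_def)
qed

context
  fixes Q :: "('a::finite \<times> 'b::finite) pmf"
begin

lemma QYm_nonneg: "QYm Q y \<ge> 0"
  by (simp add: QYm_def sum_nonneg)

lemma pmf_le_QYm: "pmf Q (x, y) \<le> QYm Q y"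
  unfolding QYm_def by (rule member_le_sum) auto

lemma sum_QYm_eq_1: "sum (QYm Q) UNIV = 1"
  using sum_UNIV_pairs[of "pmf Q"] by (simp add: QYm_def sum_pmf_eq_1)

lemma QYm_posD: "QYm Q y > 0 \<Longrightarrow> \<exists>x. pmf Q (x, y) > 0"
  unfolding QYm_def by (metis (no_types, lifting) finite pmf_nonneg order_less_le sum_nonneg_eq_0_iff)

lemma sum_by_QYm:
  "(\<Sum>z\<in>UNIV. pmf Q z * g (snd z)) = (\<Sum>y\<in>UNIV. QYm Q y * g y)"
  by (subst sum_UNIV_pairs) (simp add: QYm_def sum_distrib_right)

end

lemma beta_bound_of_variational_bounds:
  fixes l t R D1 D2 S SY ren lam :: real
  assumes l: "l > 0" and t: "t \<le> 1"
    and ren: "l * S - l * ren \<le> D1" and lam: "- lam \<le> D1 + SY - t * S"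
    and dec: "D2 = D1 + S - SY"
  shows "l / (2 * l + 1 - t) * (R - (1 - t) * ren - lam) \<le> D1 + 1/2 * max 0 (R - D2)"
proof -
  define c where "c = 2 * l + 1 - t"
  have c: "c > 0" using l t by (simp add: c_def)
  have X: "(1 - t) * (l * S - l * ren) \<le> (1 - t) * D1" using ren t by (intro mult_left_mono) auto
  have Y: "l * - lam \<le> l * (D1 + SY - t * S)" using lam l by (intro mult_left_mono) auto
  have hinge: "l * (R - D2) \<le> c / 2 * max 0 (R - D2)"
  proof -
    have "l * (R - D2) \<le> l * max 0 (R - D2)" using l by (simp add: mult_left_mono)
    also have "\<dots> \<le> c / 2 * max 0 (R - D2)" using t by (intro mult_right_mono) (auto simp: c_def)
    finally show ?thesis .
  qed
  have "l * (R - (1 - t) * ren - lam) = l * (R - D2) + c * D1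
      - ((1 - t) * D1 - (1 - t) * (l * S - l * ren)) - (l * (D1 + SY - t * S) - l * - lam)"
    by (simp add: dec c_def algebra_simps)
  also have "\<dots> \<le> c * (D1 + 1/2 * max 0 (R - D2))"
    using X Y hinge by (simp add: algebra_simps)
  finally show ?thesis using c by (simp add: c_def pos_divide_le_eq mult.commute)
qed

text \<open>\<open>tilted_mass t PX W y = P_Y(y) E[exp(t \<imath>(X;Y)) | Y = y]\<close>.\<close>
definition tilted_mass :: "real \<Rightarrow> 'a::finite pmf \<Rightarrow> ('a \<Rightarrow> 'b pmf) \<Rightarrow> 'b \<Rightarrow> real" where
  "tilted_mass t PX W y = (\<Sum>x\<in>UNIV. PXY PX W (x, y) * ratio PX W (x, y) powr t)"

context
  fixes PX :: "'a::finite pmf" and W :: "'a \<Rightarrow> 'b::finite pmf"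
begin

lemma PXY_nonneg: "PXY PX W z \<ge> 0"
  by (cases z) (simp add: PXY_def)

lemma PXY_not_pos: "\<not> PXY PX W z > 0 \<Longrightarrow> PXY PX W z = 0"
  using PXY_nonneg[of z] by simp

lemma sum_PXY_eq_1: "sum (PXY PX W) UNIV = 1"
proof -
  have "sum (PXY PX W) UNIV = (\<Sum>x\<in>UNIV. \<Sum>y\<in>UNIV. PXY PX W (x, y))"
    unfolding sum_UNIV_pairs by (rule sum.swap)
  also have "\<dots> = (\<Sum>x\<in>UNIV. pmf PX x * (\<Sum>y\<in>UNIV. pmf (W x) y))"
    by (simp add: PXY_def sum_distrib_left)
  finally show ?thesis by (simp add: sum_pmf_eq_1)
qed

lemma PYm_nonneg: "PYm PX W y \<ge> 0"
  by (simp add: PYm_def sum_nonneg PXY_nonneg)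

lemma PXY_le_PYm: "PXY PX W (x, y) \<le> PYm PX W y"
  unfolding PYm_def by (rule member_le_sum) (auto simp: PXY_nonneg)

lemma PXY_posD:
  assumes "PXY PX W (x, y) > 0"
  shows "pmf PX x > 0" "PYm PX W y > 0" "ratio PX W (x, y) > 0"
proof -
  from assms have "pmf PX x * pmf (W x) y > 0" by (simp add: PXY_def)
  then have "pmf PX x > 0" "pmf (W x) y > 0"
    by (metis pmf_nonneg less_eq_real_def mult_zero_left mult_zero_right)+
  moreover have "PYm PX W y > 0" using assms PXY_le_PYm[of x y] by linarith
  ultimately show "pmf PX x > 0" "PYm PX W y > 0" "ratio PX W (x, y) > 0"
    by (simp_all add: ratio_def)
qed

lemma PXY_eq_ratio: "PXY PX W (x, y) > 0 \<Longrightarrow> PXY PX W (x, y) = pmf PX x * PYm PX W y * ratio PX W (x, y)"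
  using PXY_posD(2)[of x y] by (simp add: ratio_def PXY_def)

lemma tilted_mass_ge_term: "PXY PX W (x, y) * ratio PX W (x, y) powr t \<le> tilted_mass t PX W y"
  unfolding tilted_mass_def by (rule member_le_sum) (auto simp: PXY_nonneg)

lemma tilted_mass_nonneg: "tilted_mass t PX W y \<ge> 0"
  by (simp add: tilted_mass_def sum_nonneg PXY_nonneg)

lemma tilted_mass_pos: "PXY PX W (x, y) > 0 \<Longrightarrow> tilted_mass t PX W y > 0"
proof -
  assume "PXY PX W (x, y) > 0"
  then have "0 < PXY PX W (x, y) * ratio PX W (x, y) powr t"
    using PXY_posD(3)[of x y] by simp
  then show ?thesis using tilted_mass_ge_term[of x y t] by linarith
qed

lemma relent_marginals_decomposition:
  fixes Q :: "('a \<times> 'b) pmf"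
  assumes ac: "\<And>z. pmf Q z > 0 \<Longrightarrow> PXY PX W z > 0"
  shows "(\<Sum>z\<in>UNIV. pmf Q z * ln (pmf Q z / (\<lambda>(x, y). pmf PX x * QYm Q y) z))
       = (\<Sum>z\<in>UNIV. pmf Q z * ln (pmf Q z / PXY PX W z))
         + (\<Sum>z\<in>UNIV. pmf Q z * ln (ratio PX W z))
         - (\<Sum>y\<in>UNIV. QYm Q y * ln (QYm Q y / PYm PX W y))"
proof -
  have "pmf Q z * ln (pmf Q z / (\<lambda>(x, y). pmf PX x * QYm Q y) z)
      = pmf Q z * ln (pmf Q z / PXY PX W z) + pmf Q z * ln (ratio PX W z)
        - pmf Q z * ln (QYm Q (snd z) / PYm PX W (snd z))" for z
  proof (cases "pmf Q z > 0")
    case True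
    obtain x y where z: "z = (x, y)" by (cases z)
    have "PXY PX W (x, y) > 0" using ac True z by simp
    moreover have "QYm Q y > 0" using True pmf_le_QYm[of Q x y] z by simp
    ultimately show ?thesis using True PXY_posD[of x y] unfolding z
      by (simp add: PXY_eq_ratio ln_div ln_mult algebra_simps)
  qed (simp add: not_less)
  then show ?thesis
    by (simp add: sum.distrib sum_subtractf sum_by_QYm[of Q "\<lambda>y. ln (QYm Q y / PYm PX W y)"])
qed

lemma tilted_cross_entropy:
  fixes Q :: "('a \<times> 'b) pmf"
  assumes ac: "\<And>z. pmf Q z > 0 \<Longrightarrow> PXY PX W z > 0"
  shows "(\<Sum>z\<in>UNIV. pmf Q z * ln (pmf Q z / (PXY PX W z * ratio PX W z powr t)))
       = (\<Sum>z\<in>UNIV. pmf Q z * ln (pmf Q z / PXY PX W z)) - t * (\<Sum>z\<in>UNIV. pmf Q z * ln (ratio PX W z))"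
proof -
  have "pmf Q z * ln (pmf Q z / (PXY PX W z * ratio PX W z powr t))
      = pmf Q z * ln (pmf Q z / PXY PX W z) - t * (pmf Q z * ln (ratio PX W z))" for z
  proof (cases "pmf Q z > 0")
    case True
    obtain x y where z: "z = (x, y)" by (cases z)
    have "PXY PX W (x, y) > 0" using ac True z by simp
    then show ?thesis using True PXY_posD(3)[of x y] unfolding z
      by (simp add: ln_div ln_mult ln_powr algebra_simps)
  qed (simp add: not_less)
  then show ?thesis by (simp add: sum_subtractf sum_distrib_left)
qed

lemma renyi_variational_bound:
  fixes Q :: "('a \<times> 'b) pmf"
  assumes "l > 0" and ac: "\<And>z. pmf Q z > 0 \<Longrightarrow> PXY PX W z > 0"
  shows "l * (\<Sum>z\<in>UNIV. pmf Q z * ln (ratio PX W z)) - l * renyi l PX W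
       \<le> (\<Sum>z\<in>UNIV. pmf Q z * ln (pmf Q z / PXY PX W z))"
proof -
  define b where "b z = PXY PX W z * ratio PX W z powr l" for z
  have "l * renyi l PX W = ln (sum b UNIV)"
    using \<open>l > 0\<close> by (simp add: renyi_def b_def sum_over_positive PXY_not_pos)
  moreover have "- ln (sum b UNIV) \<le> (\<Sum>z\<in>UNIV. pmf Q z * ln (pmf Q z / b z))"
  proof (rule log_sum_inequality_normalized)
    show "pmf Q z > 0 \<Longrightarrow> b z > 0" for z
      using ac[of z] PXY_posD(3)[of "fst z" "snd z"] by (simp add: b_def)
  qed (simp_all add: b_def PXY_nonneg sum_pmf_eq_1)
  ultimately show ?thesis using tilted_cross_entropy[OF ac, where t = l] by (simp add: b_def)
qed

lemma lam_tildeD_eq_ln_sum_sqrt: "lam_tildeD t PX W = 2 * ln (\<Sum>y\<in>UNIV. sqrt (tilted_mass t PX W y * PYm PX W y))"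
proof -
  have inner: "(\<Sum>x\<in>{x. PXY PX W (x, y) > 0}. PXY PX W (x, y) * ratio PX W (x, y) powr t)
      = tilted_mass t PX W y" for y
    unfolding tilted_mass_def
    by (rule sum_over_positive[where g = "\<lambda>x. PXY PX W (x, y)"]) (simp add: PXY_not_pos)
  have "PYm PX W y * sqrt (tilted_mass t PX W y / PYm PX W y) = sqrt (tilted_mass t PX W y * PYm PX W y)"
    if "PYm PX W y > 0" for y
  proof -
    have "PYm PX W y * sqrt (tilted_mass t PX W y / PYm PX W y)
        = sqrt (tilted_mass t PX W y) * (PYm PX W y / sqrt (PYm PX W y))"
      by (simp add: real_sqrt_divide)
    also have "\<dots> = sqrt (tilted_mass t PX W y * PYm PX W y)"
      using that by (simp add: real_div_sqrt real_sqrt_mult)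
    finally show ?thesis .
  qed
  then have "(\<Sum>y\<in>{y. PYm PX W y > 0}. PYm PX W y * sqrt (tilted_mass t PX W y / PYm PX W y))
      = (\<Sum>y\<in>{y. PYm PX W y > 0}. sqrt (tilted_mass t PX W y * PYm PX W y))"
    by (intro sum.cong) simp_all
  also have "\<dots> = (\<Sum>y\<in>UNIV. sqrt (tilted_mass t PX W y * PYm PX W y))"
    by (rule sum_over_positive) (use PYm_nonneg in \<open>simp add: not_less order_antisym\<close>)
  finally show ?thesis by (simp add: lam_tildeD_def inner)
qed

lemma fibrewise_log_sum_bound:
  fixes Q :: "('a \<times> 'b) pmf"
  assumes ac: "\<And>z. pmf Q z > 0 \<Longrightarrow> PXY PX W z > 0"
  shows "(\<Sum>y\<in>UNIV. QYm Q y * ln (QYm Q y / tilted_mass t PX W y))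
       \<le> (\<Sum>z\<in>UNIV. pmf Q z * ln (pmf Q z / PXY PX W z)) - t * (\<Sum>z\<in>UNIV. pmf Q z * ln (ratio PX W z))"
proof -
  define b where "b z = PXY PX W z * ratio PX W z powr t" for z
  have b_pos: "pmf Q z > 0 \<Longrightarrow> b z > 0" for z
    using ac[of z] PXY_posD(3)[of "fst z" "snd z"] by (simp add: b_def)
  have "QYm Q y * ln (QYm Q y / tilted_mass t PX W y) \<le> (\<Sum>x\<in>UNIV. pmf Q (x, y) * ln (pmf Q (x, y) / b (x, y)))"
    for y
  proof (cases "QYm Q y > 0")
    case True
    then obtain x where "pmf Q (x, y) > 0" using QYm_posD by blast
    then have "tilted_mass t PX W y > 0" using ac tilted_mass_pos by blast
    have "(\<Sum>x\<in>UNIV. pmf Q (x, y)) * ln ((\<Sum>x\<in>UNIV. pmf Q (x, y)) / tilted_mass t PX W y)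
        \<le> (\<Sum>x\<in>UNIV. pmf Q (x, y) * ln (pmf Q (x, y) / b (x, y)))"
    proof (rule log_sum_inequality)
      show "\<forall>x\<in>UNIV. 0 < pmf Q (x, y) \<longrightarrow> 0 < b (x, y)"
        using b_pos by simp
    qed (use True \<open>tilted_mass t PX W y > 0\<close> in \<open>simp_all add: b_def PXY_nonneg tilted_mass_def QYm_def\<close>)
    then show ?thesis by (simp add: QYm_def)
  next
    case False
    then have "pmf Q (x, y) = 0" for x using pmf_le_QYm[of Q x y] QYm_nonneg[of Q y] by simp
    then show ?thesis by (simp add: QYm_def)
  qed
  then have "(\<Sum>y\<in>UNIV. QYm Q y * ln (QYm Q y / tilted_mass t PX W y))
      \<le> (\<Sum>z\<in>UNIV. pmf Q z * ln (pmf Q z / b z))"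
    unfolding sum_UNIV_pairs[of "\<lambda>z. pmf Q z * ln (pmf Q z / b z)"] by (rule sum_mono)
  then show ?thesis by (simp only: b_def tilted_cross_entropy[OF ac])
qed

lemma lam_tildeD_variational_bound:
  fixes Q :: "('a \<times> 'b) pmf"
  assumes ac: "\<And>z. pmf Q z > 0 \<Longrightarrow> PXY PX W z > 0"
  shows "- lam_tildeD t PX W
       \<le> (\<Sum>z\<in>UNIV. pmf Q z * ln (pmf Q z / PXY PX W z))
         + (\<Sum>y\<in>UNIV. QYm Q y * ln (QYm Q y / PYm PX W y))
         - t * (\<Sum>z\<in>UNIV. pmf Q z * ln (ratio PX W z))"
proof -
  define h where "h = tilted_mass t PX W"
  define PY where "PY = PYm PX W"
  have pos: "h y > 0" "PY y > 0" if "QYm Q y > 0" for y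
  proof -
    obtain x where "pmf Q (x, y) > 0" using \<open>QYm Q y > 0\<close> QYm_posD by blast
    then have "PXY PX W (x, y) > 0" by (rule ac)
    then show "h y > 0" "PY y > 0" unfolding h_def PY_def by (rule tilted_mass_pos, rule PXY_posD(2))
  qed
  have gibbs: "- ln (\<Sum>y\<in>UNIV. sqrt (h y * PY y)) \<le> (\<Sum>y\<in>UNIV. QYm Q y * ln (QYm Q y / sqrt (h y * PY y)))"
  proof (rule log_sum_inequality_normalized)
    show "QYm Q y > 0 \<Longrightarrow> sqrt (h y * PY y) > 0" for y using pos[of y] by simp
  qed (simp_all add: QYm_nonneg sum_QYm_eq_1 h_def PY_def tilted_mass_nonneg PYm_nonneg)
  have split: "2 * (QYm Q y * ln (QYm Q y / sqrt (h y * PY y)))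
      = QYm Q y * ln (QYm Q y / h y) + QYm Q y * ln (QYm Q y / PY y)" for y
  proof (cases "QYm Q y > 0")
    case True
    then show ?thesis using pos[OF True] by (simp add: ln_div ln_mult ln_sqrt algebra_simps)
  qed (use QYm_nonneg[of Q y] in simp)
  have "- lam_tildeD t PX W = 2 * - ln (\<Sum>y\<in>UNIV. sqrt (h y * PY y))"
    unfolding h_def PY_def lam_tildeD_eq_ln_sum_sqrt by simp
  also have "\<dots> \<le> 2 * (\<Sum>y\<in>UNIV. QYm Q y * ln (QYm Q y / sqrt (h y * PY y)))"
    using gibbs by simp
  also have "\<dots> = (\<Sum>y\<in>UNIV. QYm Q y * ln (QYm Q y / h y)) + (\<Sum>y\<in>UNIV. QYm Q y * ln (QYm Q y / PY y))"
    unfolding sum_distrib_left split sum.distrib ..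
  also have "\<dots> \<le> (\<Sum>z\<in>UNIV. pmf Q z * ln (pmf Q z / PXY PX W z)) - t * (\<Sum>z\<in>UNIV. pmf Q z * ln (ratio PX W z))
      + (\<Sum>y\<in>UNIV. QYm Q y * ln (QYm Q y / PY y))"
    unfolding h_def using fibrewise_log_sum_bound[OF ac] by simp
  finally show ?thesis by (simp add: PY_def)
qed

lemma beta_term_le_alpha_term:
  fixes Q :: "('a \<times> 'b) pmf"
  assumes "l \<ge> 0" "t \<le> 1"
  shows "ereal (l / (2 * l + 1 - t) * (R - (1 - t) * renyi l PX W - lam_tildeD t PX W))
     \<le> relent (pmf Q) (PXY PX W)
       + ereal (1/2) * max 0 (ereal R - relent (pmf Q) (\<lambda>(x, y). pmf PX x * QYm Q y))"
    (is "_ \<le> _ + ?T")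
proof -
  have T: "?T \<ge> 0" by (rule ereal_0_le_mult) auto
  consider "l = 0" | "\<exists>z. pmf Q z > 0 \<and> PXY PX W z = 0" | "l > 0" "\<And>z. pmf Q z > 0 \<Longrightarrow> PXY PX W z > 0"
    using assms(1) PXY_not_pos by force
  then show ?thesis
  proof cases
    case 1
    have "relent (pmf Q) (PXY PX W) \<ge> 0" by (rule relent_nonneg) (simp_all add: PXY_nonneg sum_PXY_eq_1)
    then have "relent (pmf Q) (PXY PX W) + ?T \<ge> 0" using T by (rule add_nonneg_nonneg)
    then show ?thesis by (simp add: \<open>l = 0\<close> zero_ereal_def)
  next
    case 2
    then show ?thesis using T by (simp add: relent_def)
  next
    case 3
    have "pmf Q (x, y) > 0 \<Longrightarrow> pmf PX x * QYm Q y > 0" for x y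
      using 3(2) PXY_posD(1) pmf_le_QYm[of Q x y] by (smt (verit) mult_pos_pos)
    then have "relent (pmf Q) (\<lambda>(x, y). pmf PX x * QYm Q y)
        = ereal (\<Sum>z\<in>UNIV. pmf Q z * ln (pmf Q z / (\<lambda>(x, y). pmf PX x * QYm Q y) z))"
      by (intro relent_eq_sum) auto
    moreover have "relent (pmf Q) (PXY PX W) = ereal (\<Sum>z\<in>UNIV. pmf Q z * ln (pmf Q z / PXY PX W z))"
      using 3(2) by (intro relent_eq_sum) auto
    moreover have "l / (2 * l + 1 - t) * (R - (1 - t) * renyi l PX W - lam_tildeD t PX W)
        \<le> (\<Sum>z\<in>UNIV. pmf Q z * ln (pmf Q z / PXY PX W z))
          + 1/2 * max 0 (R - (\<Sum>z\<in>UNIV. pmf Q z * ln (pmf Q z / (\<lambda>(x, y). pmf PX x * QYm Q y) z)))"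
      by (rule beta_bound_of_variational_bounds[OF 3(1) assms(2) renyi_variational_bound[OF 3]
          lam_tildeD_variational_bound[OF 3(2)] relent_marginals_decomposition[OF 3(2)]])
    ultimately show ?thesis by (simp add: max_def split: if_split_asm)
  qed
qed

end

theorem proposition3:
  fixes PX :: "'a::finite pmf" and W :: "'a \<Rightarrow> 'b::finite pmf" and R :: real
  assumes "R > mutual_info PX W" and "mutual_info PX W > 0"
  shows "alpha_exp R PX W \<ge> beta_exp R PX W"
  unfolding beta_exp_def alpha_exp_def
  by (intro SUP_least INF_greatest) (clarify, simp only: fst_conv snd_conv, rule beta_term_le_alpha_term)

end
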